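(* Let $N\in\mathbb{N}$, $a_1,\dots,a_N\in\mathbb{C}\setminus\{0\}$, $z_1,\dots,z_N\in\mathbb{D}:=\{z\in\mathbb{C}:0<|z|<1\}$ pairwise distinct, and $\mathbf f=(f_k)_{k=0}^\infty$ with $f_k=\sum_{j=1}^N a_jz_j^k$. Let $\sigma_l$, $l\in\{0,\dots,N-1\}$, be a nonzero singular value of $\mathbf\Gamma_{\mathbf f}=(f_{k+j})_{k,j\ge0}$ of multiplicity one, and let $\mathbf v^{(l)}=(v^{(l)}_k)_{k\ge0}\in\ell^2\setminus\{0\}$ be a corresponding con-eigenvector, i.e. $\mathbf\Gamma_{\mathbf f}\overline{\mathbf v^{(l)}}=\sigma_l\mathbf v^{(l)}$. Then $$v^{(l)}_k=\frac{1}{\sigma_l}\sum_{j=1}^N a_j\,P_{\overline{\mathbf v^{(l)}}}(z_j)\,z_j^k,\qquad k\in\mathbb{N}_0,$$ where $P_{\overline{\mathbf v^{(l)}}}(z_j)=\overline{P_{\mathbf v^{(l)}}(\overline{z_j})}$, and the vector $\mathbf y=(y_r)_{r=1}^N:=(P_{\mathbf v^{(l)}}(\overline{z_r}))_{r=1}^N$ satisfies the finite con-eigenvalue system $$\sigma_l\,y_r=\sum_{j=1}^N\frac{a_j}{1-z_j\overline{z_r}}\,\overline{y_j},\qquad r=1,\dots,N.$$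
   Context: $\mathbf\Gamma_{\mathbf f}$ acts on $\ell^2(\mathbb{N}_0)$ by $(\mathbf\Gamma_{\mathbf f}\mathbf v)_k=\sum_{j\ge0}f_{k+j}v_j$. $\overline{\mathbf v}$ is the componentwise conjugate. For $\mathbf v\in\ell^2$, $P_{\mathbf v}(z)=\sum_{k\ge0}v_kz^k$ for $|z|<1$. *)

theory Defs
  imports "HOL-Analysis.Analysis"
begin

definition ell2 :: "(nat \<Rightarrow> complex) \<Rightarrow> bool" where
  "ell2 v \<longleftrightarrow> summable (\<lambda>k. (cmod (v k))^2)"

definition hankel_op :: "(nat \<Rightarrow> complex) \<Rightarrow> (nat \<Rightarrow> complex) \<Rightarrow> (nat \<Rightarrow> complex)" where
  "hankel_op f v = (\<lambda>k. \<Sum>j. f (k + j) * v j)"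

definition hankel_adj :: "(nat \<Rightarrow> complex) \<Rightarrow> (nat \<Rightarrow> complex) \<Rightarrow> (nat \<Rightarrow> complex)" where
  "hankel_adj f w = (\<lambda>k. \<Sum>j. cnj (f (j + k)) * w j)"

definition conj_seq :: "(nat \<Rightarrow> complex) \<Rightarrow> (nat \<Rightarrow> complex)" where
  "conj_seq v = (\<lambda>k. cnj (v k))"

definition gen_fun :: "(nat \<Rightarrow> complex) \<Rightarrow> complex \<Rightarrow> complex" where
  "gen_fun v z = (\<Sum>k. v k * z ^ k)"

text \<open>sigma > 0 is a singular value of Gamma_f of multiplicity one: sigma^2 is an
  eigenvalue of Gamma_f^* Gamma_f on l^2 whose eigenspace is one-dimensional.\<close>
definition simple_singular_value :: "(nat \<Rightarrow> complex) \<Rightarrow> real \<Rightarrow> bool" where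
  "simple_singular_value f \<sigma> \<longleftrightarrow> \<sigma> > 0 \<and>
     (\<exists>w0. ell2 w0 \<and> w0 \<noteq> (\<lambda>_. 0) \<and>
        hankel_adj f (hankel_op f w0) = (\<lambda>k. complex_of_real (\<sigma>^2) * w0 k) \<and>
        (\<forall>w. ell2 w \<and> hankel_adj f (hankel_op f w) = (\<lambda>k. complex_of_real (\<sigma>^2) * w k)
              \<longrightarrow> (\<exists>c. w = (\<lambda>k. c * w0 k))))"

end

theory Submission
  imports Defs
begin

text \<open>The Hankel operator of an exponential sum \<open>f\<^sub>k = \<Sum>\<^sub>j a\<^sub>j z\<^sub>j\<^sup>k\<close> has finite rank:
  \<open>(\<Gamma>\<^sub>f u)\<^sub>k = \<Sum>\<^sub>j a\<^sub>j P\<^sub>u(z\<^sub>j) z\<^sub>j\<^sup>k\<close>, because \<open>f\<^sub>k\<^sub>+\<^sub>i\<close> splits into \<open>z\<^sub>j\<^sup>k z\<^sub>j\<^sup>i\<close>.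
  Hence the con-eigenvalue equation makes \<open>v\<close> itself an exponential sum in the nodes \<open>z\<^sub>j\<close>,
  and evaluating its generating function at \<open>cnj z\<^sub>r\<close> is a finite sum of geometric series,
  which yields the Cauchy-like \<open>N \<times> N\<close> con-eigenvalue system.\<close>

lemma ell2_imp_Bseq:
  assumes "ell2 v"
  shows "Bseq v"
proof -
  have "(\<lambda>k. (cmod (v k))\<^sup>2) \<longlonglongrightarrow> 0"
    using assms unfolding ell2_def by (rule summable_LIMSEQ_zero)
  then have "(\<lambda>k. sqrt ((cmod (v k))\<^sup>2)) \<longlonglongrightarrow> sqrt 0"
    by (rule tendsto_real_sqrt)
  then have "v \<longlonglongrightarrow> 0"
    by (simp add: tendsto_norm_zero_iff)
  then show ?thesis
    by (rule convergent_imp_Bseq[OF convergentI])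
qed

lemma summable_Bseq_times_power:
  fixes u :: "nat \<Rightarrow> 'a::{real_normed_field,banach}"
  assumes "Bseq u" and "norm w < 1"
  shows "summable (\<lambda>k. u k * w ^ k)"
proof -
  obtain B where B: "\<And>k. norm (u k) \<le> B"
    using \<open>Bseq u\<close> by (auto simp: Bseq_def)
  show ?thesis
  proof (rule summable_comparison_test)
    show "\<exists>N. \<forall>k\<ge>N. norm (u k * w ^ k) \<le> B * norm w ^ k"
      using B by (auto simp: norm_mult norm_power intro!: mult_right_mono)
    show "summable (\<lambda>k. B * norm w ^ k)"
      using \<open>norm w < 1\<close> by (intro summable_mult summable_geometric) simp
  qed
qed

lemma gen_fun_conj_seq:
  assumes "summable (\<lambda>k. v k * cnj w ^ k)"
  shows "gen_fun (conj_seq v) w = cnj (gen_fun v (cnj w))"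
proof -
  have "(\<lambda>k. cnj (v k * cnj w ^ k)) sums cnj (gen_fun v (cnj w))"
    using assms unfolding gen_fun_def by (simp only: sums_cnj summable_sums)
  then show ?thesis
    by (simp add: gen_fun_def conj_seq_def sums_iff)
qed

lemma hankel_op_exp_sum:
  assumes "finite J"
    and "\<And>j. j \<in> J \<Longrightarrow> summable (\<lambda>i. u i * z j ^ i)"
  shows "hankel_op (\<lambda>k. \<Sum>j\<in>J. a j * z j ^ k) u k
           = (\<Sum>j\<in>J. a j * gen_fun u (z j) * z j ^ k)"
proof -
  have "hankel_op (\<lambda>k. \<Sum>j\<in>J. a j * z j ^ k) u k
          = (\<Sum>i. \<Sum>j\<in>J. (a j * z j ^ k) * (u i * z j ^ i))"
    by (simp add: hankel_op_def sum_distrib_left sum_distrib_right power_add mult_ac)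
  also have "\<dots> = (\<Sum>j\<in>J. \<Sum>i. (a j * z j ^ k) * (u i * z j ^ i))"
    using assms by (intro suminf_sum summable_mult) auto
  also have "\<dots> = (\<Sum>j\<in>J. a j * gen_fun u (z j) * z j ^ k)"
  proof (intro sum.cong refl)
    fix j assume "j \<in> J"
    then have "(\<Sum>i. (a j * z j ^ k) * (u i * z j ^ i)) = (a j * z j ^ k) * gen_fun u (z j)"
      unfolding gen_fun_def by (intro suminf_mult assms(2))
    then show "(\<Sum>i. (a j * z j ^ k) * (u i * z j ^ i)) = a j * gen_fun u (z j) * z j ^ k"
      by (simp only: mult_ac)
  qed
  finally show ?thesis .
qed

lemma gen_fun_exp_sum:
  assumes "finite J" and "\<And>j. j \<in> J \<Longrightarrow> norm (z j * w) < 1"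
  shows "gen_fun (\<lambda>k. \<Sum>j\<in>J. c j * z j ^ k) w = (\<Sum>j\<in>J. c j / (1 - z j * w))"
proof -
  have "gen_fun (\<lambda>k. \<Sum>j\<in>J. c j * z j ^ k) w = (\<Sum>k. \<Sum>j\<in>J. c j * (z j * w) ^ k)"
    by (simp add: gen_fun_def sum_distrib_left sum_distrib_right power_mult_distrib mult_ac)
  also have "\<dots> = (\<Sum>j\<in>J. \<Sum>k. c j * (z j * w) ^ k)"
    using assms by (intro suminf_sum summable_mult summable_geometric) auto
  also have "\<dots> = (\<Sum>j\<in>J. c j / (1 - z j * w))"
    using assms(2) by (intro sum.cong refl) (simp add: suminf_mult suminf_geometric summable_geometric)
  finally show ?thesis .
qed

lemma con_eigenvector_exp_sum:
  assumes "finite J" and "\<sigma> \<noteq> 0" and "Bseq v"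
    and "\<And>j. j \<in> J \<Longrightarrow> norm (z j) < 1"
    and "hankel_op (\<lambda>k. \<Sum>j\<in>J. a j * z j ^ k) (conj_seq v) = (\<lambda>k. \<sigma> * v k)"
  shows "v = (\<lambda>k. \<Sum>j\<in>J. a j * gen_fun (conj_seq v) (z j) / \<sigma> * z j ^ k)"
proof
  fix k
  have "Bseq (conj_seq v)"
    using \<open>Bseq v\<close> by (simp add: Bseq_def conj_seq_def)
  then have "\<sigma> * v k = (\<Sum>j\<in>J. a j * gen_fun (conj_seq v) (z j) * z j ^ k)"
    using assms(1,4) fun_cong[OF assms(5), of k, symmetric]
    by (simp add: hankel_op_exp_sum summable_Bseq_times_power)
  then have "v k = (\<Sum>j\<in>J. a j * gen_fun (conj_seq v) (z j) * z j ^ k) / \<sigma>"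
    using \<open>\<sigma> \<noteq> 0\<close> by (simp add: eq_divide_eq mult.commute)
  then show "v k = (\<Sum>j\<in>J. a j * gen_fun (conj_seq v) (z j) / \<sigma> * z j ^ k)"
    by (simp add: sum_divide_distrib times_divide_eq_left mult_ac)
qed

text \<open>Of the hypotheses on the singular value only \<open>\<sigma> > 0\<close> is needed.\<close>

theorem theorem3p2:
  fixes N :: nat and a z :: "nat \<Rightarrow> complex" and f v :: "nat \<Rightarrow> complex" and \<sigma> :: real
  assumes a_nz: "\<forall>j\<in>{1..N}. a j \<noteq> 0"
    and z_in: "\<forall>j\<in>{1..N}. 0 < cmod (z j) \<and> cmod (z j) < 1"
    and z_dist: "inj_on z {1..N}"
    and f_def: "f = (\<lambda>k. \<Sum>j=1..N. a j * z j ^ k)"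
    and sv: "simple_singular_value f \<sigma>"
    and v_l2: "ell2 v" and v_nz: "v \<noteq> (\<lambda>_. 0)"
    and coneig: "hankel_op f (conj_seq v) = (\<lambda>k. complex_of_real \<sigma> * v k)"
  shows "(\<forall>k. v k = (1 / complex_of_real \<sigma>) *
                 (\<Sum>j=1..N. a j * gen_fun (conj_seq v) (z j) * z j ^ k))
       \<and> (\<forall>j\<in>{1..N}. gen_fun (conj_seq v) (z j) = cnj (gen_fun v (cnj (z j))))
       \<and> (\<forall>r\<in>{1..N}. complex_of_real \<sigma> * gen_fun v (cnj (z r)) =
             (\<Sum>j=1..N. a j / (1 - z j * cnj (z r)) * cnj (gen_fun v (cnj (z j)))))"
proof -
  have \<sigma>_nz: "complex_of_real \<sigma> \<noteq> 0"
    using sv by (simp add: simple_singular_value_def)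
  have v_Bseq: "Bseq v"
    using v_l2 by (rule ell2_imp_Bseq)
  define c where "c j = a j * gen_fun (conj_seq v) (z j) / complex_of_real \<sigma>" for j
  have v_exp_sum: "v = (\<lambda>k. \<Sum>j=1..N. c j * z j ^ k)"
    unfolding c_def using \<sigma>_nz v_Bseq z_in coneig
    by (intro con_eigenvector_exp_sum) (auto simp: f_def)
  have conj_gen_fun: "gen_fun (conj_seq v) (z j) = cnj (gen_fun v (cnj (z j)))" if "j \<in> {1..N}" for j
    using that z_in by (intro gen_fun_conj_seq summable_Bseq_times_power[OF v_Bseq]) auto
  have node_prod_lt_1: "cmod (z j * cnj (z r)) < 1" if "j \<in> {1..N}" "r \<in> {1..N}" for j r
    using that z_in mult_strict_mono'[of "cmod (z j)" 1 "cmod (z r)" 1] by (simp add: norm_mult)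
  have gen_fun_v: "gen_fun v (cnj (z r)) = (\<Sum>j=1..N. c j / (1 - z j * cnj (z r)))"
    if "r \<in> {1..N}" for r
    unfolding v_exp_sum using that node_prod_lt_1 by (intro gen_fun_exp_sum) auto
  have "v k = (1 / complex_of_real \<sigma>) *
                 (\<Sum>j=1..N. a j * gen_fun (conj_seq v) (z j) * z j ^ k)" for k
    by (subst v_exp_sum) (simp add: c_def sum_distrib_left)
  moreover have "complex_of_real \<sigma> * gen_fun v (cnj (z r)) =
      (\<Sum>j=1..N. a j / (1 - z j * cnj (z r)) * cnj (gen_fun v (cnj (z j))))" if "r \<in> {1..N}" for r
    using \<sigma>_nz by (simp add: gen_fun_v[OF that] sum_distrib_left c_def conj_gen_fun)
  ultimately show ?thesis
    using conj_gen_fun by blast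
qed

end
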